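(* Let $\delta>0$, let $X$ be a geodesic $\delta$--hyperbolic space, and let the group $G$ act $(\kappa_0,N_0)$--acylindrically on $X$ with $\kappa_0\geqslant\delta$; put $\rho_0:=\delta/N_0$ and $c:=\frac1{10^6}\cdot\frac{\rho_0}{\kappa_0}$. Let $U\subset G$ be finite, let $x_0\in X$ be a point with $\frac1{|U|}\sum_{u\in U}|ux_0-x_0|\leqslant E(U)+\delta$, let $U_1:=\{u\in U\mid|ux_0-x_0|\leqslant\kappa_0\}$ and $\lambda_0(U):=\max_{u\in U}|ux_0-x_0|$. If $|U_1|\geqslant\frac14|U|$ and $\lambda_0(U)\geqslant10^4\kappa_0$, then for all natural numbers $n\geqslant1$, $$|U^n|\geqslant\left(\frac c4|U|\right)^{[(n+1)/2]}.$$
   Context: Distance $|x-y|$; Gromov product $(p,q)_x=\frac12(|p-x|+|q-x|-|p-q|)$; $X$ is $\delta$--hyperbolic if $(p,r)_x\geqslant\min\{(p,q)_x,(q,r)_x\}-\delta$ for all $p,q,r,x$. The action is $(\kappa_0,N_0)$--acylindrical ($N_0\geqslant1$) if for all $x,y$ with $|x-y|\geqslant\kappa_0$ at most $N_0$ elements $g\in G$ satisfy $|gx-x|\leqslant100\delta$ and $|gy-y|\leqslant100\delta$. $E(U):=\inf_{x\in X}\frac1{|U|}\sum_{u\in U}|ux-x|$. $U^n$ is the set of products of $n$ elements of $U$; $[x]$ is the integral part. *)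

theory Defs
  imports "HOL-Analysis.Analysis" "HOL-Algebra.Group_Action"
begin

definition gromov_product :: "'a::metric_space \<Rightarrow> 'a \<Rightarrow> 'a \<Rightarrow> real" where
  "gromov_product p q x = (dist p x + dist q x - dist p q) / 2"

definition delta_hyperbolic :: "real \<Rightarrow> 'a::metric_space itself \<Rightarrow> bool" where
  "delta_hyperbolic \<delta> _ \<longleftrightarrow>
     (\<forall>p q r x::'a. gromov_product p r x \<ge> min (gromov_product p q x) (gromov_product q r x) - \<delta>)"

definition geodesic_space :: "'a::metric_space itself \<Rightarrow> bool" where
  "geodesic_space _ \<longleftrightarrow>
     (\<forall>x y::'a. \<exists>\<gamma>::real \<Rightarrow> 'a. \<gamma> 0 = x \<and> \<gamma> (dist x y) = y \<and>
        (\<forall>s\<in>{0..dist x y}. \<forall>t\<in>{0..dist x y}. dist (\<gamma> s) (\<gamma> t) = \<bar>s - t\<bar>))"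

definition isometric_action :: "('g, 'm) monoid_scheme \<Rightarrow> ('g \<Rightarrow> 'a::metric_space \<Rightarrow> 'a) \<Rightarrow> bool" where
  "isometric_action G \<phi> \<longleftrightarrow> group_action G UNIV \<phi> \<and>
     (\<forall>g\<in>carrier G. \<forall>x y. dist (\<phi> g x) (\<phi> g y) = dist x y)"

definition acylindrical ::
  "('g, 'm) monoid_scheme \<Rightarrow> ('g \<Rightarrow> 'a::metric_space \<Rightarrow> 'a) \<Rightarrow> real \<Rightarrow> real \<Rightarrow> nat \<Rightarrow> bool" where
  "acylindrical G \<phi> \<delta> \<kappa>0 N0 \<longleftrightarrow> N0 \<ge> 1 \<and>
     (\<forall>x y. dist x y \<ge> \<kappa>0 \<longrightarrow>
        (let S = {g \<in> carrier G. dist (\<phi> g x) x \<le> 100 * \<delta> \<and> dist (\<phi> g y) y \<le> 100 * \<delta>}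
         in finite S \<and> card S \<le> N0))"

definition displacement_energy :: "('g \<Rightarrow> 'a::metric_space \<Rightarrow> 'a) \<Rightarrow> 'g set \<Rightarrow> real" where
  "displacement_energy \<phi> U = (INF x. (\<Sum>u\<in>U. dist (\<phi> u x) x) / real (card U))"

fun set_power :: "('g, 'm) monoid_scheme \<Rightarrow> 'g set \<Rightarrow> nat \<Rightarrow> 'g set" where
  "set_power G U 0 = {\<one>\<^bsub>G\<^esub>}"
| "set_power G U (Suc n) = {a \<otimes>\<^bsub>G\<^esub> b | a b. a \<in> set_power G U n \<and> b \<in> U}"

end

theory Submission
  imports Defs
begin

text \<open>Let \<open>u \<in> U\<close> have maximal displacement \<open>L = |u x\<^sub>0 - x\<^sub>0| \<ge> 10\<^sup>4 \<kappa>\<^sub>0\<close> and put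
  \<open>q = u x\<^sub>0\<close>. A short element \<open>a\<close> (\<open>|a x\<^sub>0 - x\<^sub>0| \<le> \<kappa>\<^sub>0\<close>) changes the distance from
  \<open>x\<^sub>0\<close> to \<open>q\<close> by at most \<open>\<kappa>\<^sub>0\<close>. If two short elements \<open>a, b\<close> send \<open>q\<close> in almost the
  same direction (\<open>(a q, b q)\<^sub>x\<^sub>0 \<ge> 10 \<kappa>\<^sub>0 - \<delta>\<close>) and to almost the same distance from \<open>x\<^sub>0\<close>
  (up to \<open>\<delta>\<close>), they move the points of \<open>[x\<^sub>0, q]\<close> at distance \<open>3 \<kappa>\<^sub>0\<close> and \<open>4 \<kappa>\<^sub>0\<close> from
  \<open>x\<^sub>0\<close> to within \<open>9 \<delta>\<close> of each other, so acylindricity allows at most \<open>N\<^sub>0\<close> of them.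
  Hence a maximal family \<open>V\<close> of short elements sending \<open>q\<close> in pairwise separated directions
  has about \<open>|U\<^sub>1| \<delta> / (3 \<kappa>\<^sub>0 N\<^sub>0)\<close> members, after discarding the one element that may
  point back towards \<open>u\<^sup>-\<^sup>1 x\<^sub>0\<close>. The elements \<open>a u\<close>, \<open>a \<in> V\<close>, then play ping-pong: the words
  \<open>a\<^sub>1 u a\<^sub>2 u \<dots> a\<^sub>k u\<close> are pairwise distinct and are right translates by \<open>u\<close> of elements of
  \<open>U\<^bsup>2k-1\<^esup>\<close>, so \<open>|U\<^sup>n| \<ge> |V|\<^sup>k\<close> with \<open>k = [(n+1)/2]\<close>.\<close>

section \<open>Hyperbolic geodesic spaces\<close>

lemma gromov_product_commute: "gromov_product p q x = gromov_product q p x"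
  unfolding gromov_product_def by (simp add: dist_commute)

lemma gromov_product_at_right: "gromov_product p q q = 0"
  unfolding gromov_product_def by (simp add: dist_commute)

lemma gromov_product_self: "gromov_product p p x = dist p x"
  unfolding gromov_product_def by simp

lemma gromov_product_add_swap: "gromov_product y z x + gromov_product x y z = dist z x"
  unfolding gromov_product_def by (simp add: dist_commute field_simps)

lemma gromov_product_nonneg: "gromov_product p q x \<ge> 0"
  unfolding gromov_product_def using dist_triangle[of p q x] by (simp add: dist_commute)

lemma gromov_product_lipschitz: "\<bar>gromov_product p q x - gromov_product p' q x\<bar> \<le> dist p p'"
proof -
  have "\<bar>dist p x - dist p' x\<bar> \<le> dist p p'" "\<bar>dist p q - dist p' q\<bar> \<le> dist p p'"
    by (metis abs_le_iff dist_commute dist_triangle3 minus_diff_eq diff_le_eq)+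
  then show ?thesis
    unfolding gromov_product_def by (simp add: abs_le_iff field_simps)
qed

lemma dist_le_of_gromov_product_ge:
  assumes "gromov_product z z' x \<ge> min (dist z x) (dist z' x) - c"
  shows "dist z z' \<le> \<bar>dist z x - dist z' x\<bar> + 2 * c"
proof -
  have "dist z z' = dist z x + dist z' x - 2 * gromov_product z z' x"
    unfolding gromov_product_def by (simp add: field_simps)
  then show ?thesis using assms by (cases "dist z x \<le> dist z' x") (simp_all add: min_def)
qed

lemma delta_hyperbolicD:
  fixes p q r x :: "'a::metric_space"
  assumes "delta_hyperbolic \<delta> TYPE('a)"
  shows "gromov_product p r x \<ge> min (gromov_product p q x) (gromov_product q r x) - \<delta>"
  using assms unfolding delta_hyperbolic_def by blast

lemma delta_hyperbolic_nonneg: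
  assumes "delta_hyperbolic \<delta> TYPE('a::metric_space)"
  shows "\<delta> \<ge> 0"
  using delta_hyperbolicD[OF assms, of "undefined :: 'a" "undefined" "undefined" "undefined"]
  by simp

lemma delta_hyperbolic_four_points:
  fixes p q r s x :: "'a::metric_space"
  assumes "delta_hyperbolic \<delta> TYPE('a)"
  shows "gromov_product p s x \<ge>
    min (gromov_product p q x) (min (gromov_product q r x) (gromov_product r s x)) - 2 * \<delta>"
    (is "_ \<ge> ?m - _")
proof -
  have "gromov_product q s x \<ge> min (gromov_product q r x) (gromov_product r s x) - \<delta>"
    using delta_hyperbolicD[OF assms] .
  moreover have "min (gromov_product q r x) (gromov_product r s x) \<ge> ?m"
    by (rule min.cobounded2)
  ultimately have "gromov_product q s x \<ge> ?m - \<delta>" by linarith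
  moreover have "gromov_product p q x \<ge> ?m" "\<delta> \<ge> 0"
    using delta_hyperbolic_nonneg[OF assms] by simp_all
  ultimately have "min (gromov_product p q x) (gromov_product q s x) \<ge> ?m - \<delta>" by simp
  moreover have "gromov_product p s x \<ge> min (gromov_product p q x) (gromov_product q s x) - \<delta>"
    using delta_hyperbolicD[OF assms] .
  ultimately show ?thesis by linarith
qed

lemma gromov_product_geodesic_point_ge:
  fixes x y z w :: "'a::metric_space"
  assumes "delta_hyperbolic \<delta> TYPE('a)"
    and "dist y z + dist z w = dist y w" and "dist x y \<le> \<kappa>" and "dist y z > \<kappa> + \<delta>"
  shows "gromov_product z w x \<ge> dist z x - \<delta>"
proof -
  have "gromov_product y w z = 0"
    using assms(2) unfolding gromov_product_def by (simp add: dist_commute)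
  moreover have "gromov_product y x z > \<delta>"
    using assms(3,4) dist_triangle[of y z x] unfolding gromov_product_def
    by (simp add: dist_commute)
  ultimately have "gromov_product x w z \<le> \<delta>"
    using delta_hyperbolicD[OF assms(1), where p = y and q = x and r = w and x = z]
    by (auto simp: min_def split: if_splits)
  then show ?thesis
    unfolding gromov_product_def by (simp add: dist_commute field_simps)
qed

lemma card_gromov_product_gt_le_one:
  fixes f :: "'b \<Rightarrow> 'a::metric_space"
  assumes "delta_hyperbolic \<delta> TYPE('a)" and "finite V"
    and "\<And>a b. a \<in> V \<Longrightarrow> b \<in> V \<Longrightarrow> a \<noteq> b \<Longrightarrow> gromov_product (f a) (f b) x \<le> T"
  shows "card {a \<in> V. gromov_product y (f a) x > T + \<delta>} \<le> 1"
proof -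
  have "a = b" if "a \<in> V" "b \<in> V" "gromov_product y (f a) x > T + \<delta>" "gromov_product y (f b) x > T + \<delta>"
    for a b
  proof (rule ccontr)
    assume "a \<noteq> b"
    have "gromov_product (f a) (f b) x \<ge> min (gromov_product (f a) y x) (gromov_product y (f b) x) - \<delta>"
      using delta_hyperbolicD[OF assms(1)] .
    then have "gromov_product (f a) (f b) x > T"
      using that(3,4) gromov_product_commute[of y "f a" x] by (auto simp: min_def split: if_splits)
    then show False using assms(3)[OF that(1,2) \<open>a \<noteq> b\<close>] by simp
  qed
  then have "card {a \<in> V. gromov_product y (f a) x > T + \<delta>} \<le> Suc 0"
    using assms(2) by (subst card_le_Suc0_iff_eq) auto
  then show ?thesis by simp
qed

lemma geodesic_space_points_between:
  fixes x q :: "'a::metric_space"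
  assumes "geodesic_space TYPE('a)" and "0 \<le> s" "s \<le> t" "t \<le> dist x q"
  shows "\<exists>p p'. dist x p = s \<and> dist x p + dist p q = dist x q
    \<and> dist x p' = t \<and> dist x p' + dist p' q = dist x q \<and> dist p p' = t - s"
proof -
  obtain \<gamma> :: "real \<Rightarrow> 'a" where \<gamma>: "\<gamma> 0 = x" "\<gamma> (dist x q) = q"
    and \<gamma>_dist: "\<And>s t. s \<in> {0..dist x q} \<Longrightarrow> t \<in> {0..dist x q} \<Longrightarrow> dist (\<gamma> s) (\<gamma> t) = \<bar>s - t\<bar>"
    using assms(1) unfolding geodesic_space_def by metis
  have "dist x (\<gamma> r) = r" "dist (\<gamma> r) q = dist x q - r" if "0 \<le> r" "r \<le> dist x q" for r
    using \<gamma>_dist[of 0 r] \<gamma>_dist[of r "dist x q"] \<gamma> that by auto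
  moreover have "dist (\<gamma> s) (\<gamma> t) = t - s" using \<gamma>_dist[of s t] assms(2-4) by auto
  ultimately show ?thesis using assms(2-4) by (intro exI[of _ "\<gamma> s"] exI[of _ "\<gamma> t"]) auto
qed

lemma exists_dominating_independent_subset:
  assumes "finite S" and "\<And>a. a \<in> S \<Longrightarrow> P a a" and "\<And>a b. P a b \<Longrightarrow> P b a"
  shows "\<exists>V\<subseteq>S. (\<forall>a\<in>V. \<forall>b\<in>V. a \<noteq> b \<longrightarrow> \<not> P a b) \<and> (\<forall>a\<in>S. \<exists>v\<in>V. P a v)"
  using assms(1,2)
proof (induction S rule: finite_psubset_induct)
  case (psubset A)
  show ?case
  proof (cases "A = {}")
    case True
    then show ?thesis by auto
  next
    case False
    then obtain a where a: "a \<in> A" by auto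
    define B where "B = {b \<in> A. \<not> P b a}"
    have "B \<subset> A" unfolding B_def using a psubset.prems by auto
    then obtain V where V: "V \<subseteq> B" "\<forall>x\<in>V. \<forall>y\<in>V. x \<noteq> y \<longrightarrow> \<not> P x y"
      "\<forall>x\<in>B. \<exists>v\<in>V. P x v"
      using psubset.IH[of B] psubset.prems unfolding B_def by auto
    have "insert a V \<subseteq> A" using V(1) a unfolding B_def by auto
    moreover have "\<forall>x\<in>insert a V. \<forall>y\<in>insert a V. x \<noteq> y \<longrightarrow> \<not> P x y"
      using V(1,2) assms(3) unfolding B_def by blast
    moreover have "\<forall>x\<in>A. \<exists>v\<in>insert a V. P x v" using V(3) unfolding B_def by blast
    ultimately show ?thesis by blast
  qed
qed

lemma card_le_cover:
  assumes "finite V" and "S \<subseteq> (\<Union>v\<in>V. C v)"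
    and "\<And>v. v \<in> V \<Longrightarrow> finite (C v)" and "\<And>v. v \<in> V \<Longrightarrow> real (card (C v)) \<le> M"
  shows "real (card S) \<le> real (card V) * M"
proof -
  have "card S \<le> card (\<Union>v\<in>V. C v)" using assms(1-3) by (intro card_mono) auto
  also have "\<dots> \<le> (\<Sum>v\<in>V. card (C v))" using assms(1) by (rule card_UN_le)
  finally have "real (card S) \<le> (\<Sum>v\<in>V. real (card (C v)))" by (simp flip: of_nat_sum)
  also have "\<dots> \<le> (\<Sum>v\<in>V. M)" using assms(4) by (rule sum_mono)
  finally show ?thesis by simp
qed

lemma abs_diff_le_of_floor_divide_eq:
  fixes x y d :: real
  assumes "\<lfloor>x / d\<rfloor> = \<lfloor>y / d\<rfloor>" and "d > 0"
  shows "\<bar>x - y\<bar> \<le> d"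
proof -
  have "\<bar>x / d - y / d\<bar> < 1"
    using assms(1) floor_correct[of "x / d"] floor_correct[of "y / d"] by linarith
  then have "\<bar>x - y\<bar> / d < 1" using assms(2) by (simp add: diff_divide_distrib[symmetric])
  then show ?thesis using assms(2) by (simp add: divide_less_eq)
qed

lemma real_card_floor_range_le:
  fixes \<delta> \<kappa> :: real
  assumes "0 < \<delta>" and "\<delta> \<le> \<kappa>"
  shows "real (card {0..\<lfloor>2 * \<kappa> / \<delta>\<rfloor>}) \<le> 3 * \<kappa> / \<delta>"
proof -
  have "real (card {0..\<lfloor>2 * \<kappa> / \<delta>\<rfloor>}) = real_of_int \<lfloor>2 * \<kappa> / \<delta>\<rfloor> + 1" using assms by simp
  also have "\<dots> \<le> 2 * \<kappa> / \<delta> + 1" by linarith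
  also have "\<dots> \<le> 3 * \<kappa> / \<delta>" using assms by (simp add: field_simps)
  finally show ?thesis .
qed

section \<open>Products of subsets of a group\<close>

definition listprod :: "('g, 'm) monoid_scheme \<Rightarrow> 'g list \<Rightarrow> 'g" where
  "listprod G xs = foldr (\<otimes>\<^bsub>G\<^esub>) xs \<one>\<^bsub>G\<^esub>"

lemma listprod_Nil [simp]: "listprod G [] = \<one>\<^bsub>G\<^esub>"
  and listprod_Cons [simp]: "listprod G (x # xs) = x \<otimes>\<^bsub>G\<^esub> listprod G xs"
  by (simp_all add: listprod_def)

lemma (in monoid) listprod_closed: "set xs \<subseteq> carrier G \<Longrightarrow> listprod G xs \<in> carrier G"
  by (induction xs) auto

lemma finite_set_power: "finite U \<Longrightarrow> finite (set_power G U n)"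
proof (induction n)
  case (Suc n)
  have "set_power G U (Suc n) = (\<lambda>(a, b). a \<otimes>\<^bsub>G\<^esub> b) ` (set_power G U n \<times> U)" by auto
  then show ?case using Suc by simp
qed simp

lemma (in monoid) set_power_subset_carrier: "U \<subseteq> carrier G \<Longrightarrow> set_power G U n \<subseteq> carrier G"
  by (induction n) auto

lemma set_power_SucI: "w \<in> set_power G U n \<Longrightarrow> b \<in> U \<Longrightarrow> w \<otimes>\<^bsub>G\<^esub> b \<in> set_power G U (Suc n)"
  by auto

lemma (in monoid) mult_mem_set_power_Suc:
  assumes "U \<subseteq> carrier G" and "a \<in> U" and "w \<in> set_power G U n"
  shows "a \<otimes> w \<in> set_power G U (Suc n)"
  using assms(3)
proof (induction n arbitrary: w)
  case 0
  have "a \<otimes> \<one> = \<one> \<otimes> a" using assms(1,2) by auto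
  then show ?case using 0 assms(2) set_power_SucI[of \<one> G U 0 a] by simp
next
  case (Suc n)
  then obtain w' b where w: "w = w' \<otimes> b" "w' \<in> set_power G U n" "b \<in> U" by auto
  then have "w' \<in> carrier G" "a \<in> carrier G" "b \<in> carrier G"
    using assms(1,2) set_power_subset_carrier[OF assms(1)] by auto
  then have "a \<otimes> w = (a \<otimes> w') \<otimes> b" using w(1) by (simp add: m_assoc)
  then show ?case using set_power_SucI[OF Suc.IH[OF w(2)] w(3)] by simp
qed

lemma (in group) card_set_power_mono:
  assumes "U \<subseteq> carrier G" and "finite U" and "U \<noteq> {}" and "m \<le> n"
  shows "card (set_power G U m) \<le> card (set_power G U n)"
  using assms(4)
proof (induction n rule: dec_induct)
  case (step n)
  obtain b where b: "b \<in> U" using assms(3) by auto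
  have "inj_on (\<lambda>w. w \<otimes> b) (set_power G U n)"
  proof (rule inj_onI)
    fix w w' assume "w \<in> set_power G U n" "w' \<in> set_power G U n" "w \<otimes> b = w' \<otimes> b"
    moreover have "w \<in> carrier G" "w' \<in> carrier G" "b \<in> carrier G"
      using calculation b assms(1) set_power_subset_carrier[OF assms(1)] by auto
    ultimately show "w = w'" by simp
  qed
  moreover have "(\<lambda>w. w \<otimes> b) ` set_power G U n \<subseteq> set_power G U (Suc n)"
    using set_power_SucI[OF _ b] by blast
  ultimately have "card (set_power G U n) \<le> card (set_power G U (Suc n))"
    using card_inj_on_le[OF _ _ finite_set_power[OF assms(2)]] by blast
  then show ?case using step.IH by simp
qed simp

lemma (in monoid) set_power_one:
  assumes "U \<subseteq> carrier G"
  shows "set_power G U 1 = U"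
proof -
  have "set_power G U 1 = {a \<otimes> b | a b. a \<in> {\<one>} \<and> b \<in> U}"
    by (simp only: One_nat_def set_power.simps)
  also have "\<dots> = U"
  proof (intro equalityI subsetI)
    fix x assume "x \<in> {a \<otimes> b | a b. a \<in> {\<one>} \<and> b \<in> U}"
    then obtain b where "x = \<one> \<otimes> b" "b \<in> U" by blast
    then show "x \<in> U" using assms by auto
  next
    fix b assume b: "b \<in> U"
    then have "b = \<one> \<otimes> b" using assms by auto
    then show "b \<in> {a \<otimes> b | a b. a \<in> {\<one>} \<and> b \<in> U}" using b by blast
  qed
  finally show ?thesis .
qed

lemma (in monoid) listprod_mult_right_mem_set_power:
  assumes "U \<subseteq> carrier G" and "u \<in> U" and "set as \<subseteq> U" and "as \<noteq> []"
  shows "listprod G (map (\<lambda>a. a \<otimes> u) as) \<in> (\<lambda>w. w \<otimes> u) ` set_power G U (2 * length as - 1)"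
  using assms(3,4)
proof (induction as rule: induct_list012)
  case (2 a)
  then have "a \<in> carrier G" "u \<in> carrier G" using assms(1,2) by auto
  then have "listprod G (map (\<lambda>a. a \<otimes> u) [a]) = a \<otimes> u" by simp
  moreover have "a \<in> set_power G U (2 * length [a] - 1)"
    using 2(1) set_power_one[OF assms(1)] by simp
  ultimately show ?case by (rule image_eqI)
next
  case (3 a b as)
  have "set (b # as) \<subseteq> U" using 3(3) by simp
  then have "listprod G (map (\<lambda>a. a \<otimes> u) (b # as))
      \<in> (\<lambda>w. w \<otimes> u) ` set_power G U (2 * length (b # as) - 1)"
    by (rule 3(2)) simp
  then obtain w where w: "listprod G (map (\<lambda>a. a \<otimes> u) (b # as)) = w \<otimes> u"
    "w \<in> set_power G U (2 * length (b # as) - 1)"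
    by (rule imageE)
  have c: "a \<in> carrier G" "u \<in> carrier G" "w \<in> carrier G"
    using 3(3) assms(1,2) w(2) set_power_subset_carrier[OF assms(1)] by auto
  have len: "2 * length (a # b # as) - 1 = Suc (Suc (2 * length (b # as) - 1))" by simp
  have "listprod G (map (\<lambda>a. a \<otimes> u) (a # b # as)) = (a \<otimes> (u \<otimes> w)) \<otimes> u"
    using w(1) c by (simp add: m_assoc)
  moreover have "a \<otimes> (u \<otimes> w) \<in> set_power G U (2 * length (a # b # as) - 1)"
    unfolding len using 3(3) by (intro mult_mem_set_power_Suc assms w(2)) simp
  ultimately show ?case by (rule image_eqI)
qed simp

locale hyperbolic_isometric_action =
  fixes G :: "('g, 'm) monoid_scheme" (structure)
    and \<phi> :: "'g \<Rightarrow> 'a::metric_space \<Rightarrow> 'a" and \<delta> :: real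
  assumes isometric: "isometric_action G \<phi>"
    and hyperbolic: "delta_hyperbolic \<delta> TYPE('a)"
begin

lemma group_action: "group_action G UNIV \<phi>"
  using isometric unfolding isometric_action_def by blast

lemma dist_act: "g \<in> carrier G \<Longrightarrow> dist (\<phi> g x) (\<phi> g y) = dist x y"
  using isometric unfolding isometric_action_def by blast

sublocale group G
  using group_action group_action.group_hom group_hom.axioms(1) by blast

lemma delta_nonneg: "\<delta> \<ge> 0"
  using delta_hyperbolic_nonneg[OF hyperbolic] .

lemma act_mult: "g \<in> carrier G \<Longrightarrow> h \<in> carrier G \<Longrightarrow> \<phi> (g \<otimes> h) x = \<phi> g (\<phi> h x)"
  using group_action.composition_rule[OF group_action] by blast

lemma act_inv_cancel: "g \<in> carrier G \<Longrightarrow> \<phi> g (\<phi> (inv g) x) = x"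
  using group_action.orbit_sym_aux[OF group_action, of "inv g"] by simp

lemma gromov_product_act:
  "g \<in> carrier G \<Longrightarrow> gromov_product (\<phi> g p) (\<phi> g q) (\<phi> g x) = gromov_product p q x"
  unfolding gromov_product_def by (simp add: dist_act)

lemma dist_act_inv: "g \<in> carrier G \<Longrightarrow> dist (\<phi> (inv g) x) y = dist x (\<phi> g y)"
  using dist_act[of g "\<phi> (inv g) x" y] by (simp add: act_inv_cancel)

lemma dist_act_inv_mult:
  "g \<in> carrier G \<Longrightarrow> h \<in> carrier G \<Longrightarrow> dist (\<phi> (inv g \<otimes> h) x) x = dist (\<phi> h x) (\<phi> g x)"
  by (simp add: act_mult dist_act_inv)

lemma abs_dist_act_diff_le:
  "g \<in> carrier G \<Longrightarrow> \<bar>dist (\<phi> g y) x - dist y x\<bar> \<le> dist (\<phi> g x) x"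
  using dist_act[of g y x] dist_triangle[of "\<phi> g y" x "\<phi> g x"] dist_triangle[of "\<phi> g y" "\<phi> g x" x]
  by (simp add: dist_commute abs_le_iff)

section \<open>Ping-pong\<close>

context
  fixes x :: 'a and V :: "'b set" and g :: "'b \<Rightarrow> 'g" and D \<epsilon> :: real
  assumes g_carrier: "\<And>a. a \<in> V \<Longrightarrow> g a \<in> carrier G"
    and long: "\<And>a. a \<in> V \<Longrightarrow> dist (\<phi> (g a) x) x \<ge> D"
    and backtrack: "\<And>a b. a \<in> V \<Longrightarrow> b \<in> V \<Longrightarrow> gromov_product (\<phi> (inv (g a)) x) (\<phi> (g b) x) x \<le> \<epsilon>"
    and separated: "\<And>a b. a \<in> V \<Longrightarrow> b \<in> V \<Longrightarrow> a \<noteq> b \<Longrightarrow>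
      gromov_product (\<phi> (g a) x) (\<phi> (g b) x) x \<le> \<epsilon>"
    and long_enough: "D > 2 * (\<epsilon> + \<delta>)"
begin

lemma ping_pong_gromov_product:
  assumes "as \<noteq> []" and "set as \<subseteq> V"
  shows "gromov_product x (\<phi> (listprod G (map g as)) x) (\<phi> (g (hd as)) x) \<le> \<epsilon> + \<delta>"
  using assms
proof (induction as rule: induct_list012)
  case (2 a)
  then have a: "a \<in> V" by simp
  then have "\<epsilon> \<ge> 0" using backtrack[OF a a] gromov_product_nonneg order_trans by blast
  then show ?case
    using g_carrier[OF a] delta_nonneg by (simp add: gromov_product_at_right)
next
  case (3 a b as)
  have a: "a \<in> V" and b: "b \<in> V" and rest: "set (b # as) \<subseteq> V" using 3(4) by auto
  define w where "w = listprod G (map g (b # as))"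
  have ga: "g a \<in> carrier G" using a g_carrier by blast
  have w: "w \<in> carrier G"
    unfolding w_def using rest g_carrier by (intro listprod_closed) (auto simp: subset_iff)
  define y1 y2 yw where "y1 = \<phi> (g a) x" and "y2 = \<phi> (g a) (\<phi> (g b) x)" and "yw = \<phi> (g a) (\<phi> w x)"
  have "gromov_product y1 yw y2 \<le> \<epsilon> + \<delta>"
    using 3(2)[OF _ rest] gromov_product_act[OF ga] unfolding y1_def y2_def yw_def w_def by simp
  moreover have "dist y2 y1 \<ge> D" unfolding y1_def y2_def using dist_act[OF ga] long[OF b] by simp
  ultimately have far: "gromov_product yw y2 y1 \<ge> D - \<epsilon> - \<delta>"
    using gromov_product_add_swap[of yw y2 y1] gromov_product_commute[of yw y1 y2] by linarith
  have "gromov_product x y2 y1 = gromov_product (\<phi> (inv (g a)) x) (\<phi> (g b) x) x"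
    using gromov_product_act[OF ga, of "\<phi> (inv (g a)) x" "\<phi> (g b) x" x] act_inv_cancel[OF ga]
    unfolding y1_def y2_def by simp
  then have "gromov_product x y2 y1 \<le> \<epsilon>" using backtrack[OF a b] by simp
  moreover have "gromov_product x y2 y1 \<ge> min (gromov_product x yw y1) (gromov_product yw y2 y1) - \<delta>"
    using delta_hyperbolicD[OF hyperbolic] .
  ultimately have "gromov_product x yw y1 \<le> \<epsilon> + \<delta>"
    using far long_enough delta_nonneg by (auto simp: min_def split: if_splits)
  moreover have "\<phi> (listprod G (map g (a # b # as))) x = yw"
    unfolding yw_def w_def using act_mult[OF ga w] w_def by simp
  ultimately show ?case unfolding y1_def by simp
qed simp

lemma ping_pong_head_eq:
  assumes as: "set (a # as) \<subseteq> V" and bs: "set (b # bs) \<subseteq> V"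
    and eq: "listprod G (map g (a # as)) = listprod G (map g (b # bs))"
  shows "a = b"
proof (rule ccontr)
  assume "a \<noteq> b"
  \<comment> \<open>both \<open>g a\<close> and \<open>g b\<close> would point from \<open>x\<close> towards the common image \<open>y\<close>\<close>
  define y where "y = \<phi> (listprod G (map g (a # as))) x"
  have a: "a \<in> V" and b: "b \<in> V" using as bs by auto
  have "gromov_product x y (\<phi> (g a) x) \<le> \<epsilon> + \<delta>"
    using ping_pong_gromov_product[OF _ as] unfolding y_def by simp
  then have fa: "gromov_product (\<phi> (g a) x) y x \<ge> D - \<epsilon> - \<delta>"
    using gromov_product_add_swap[of y "\<phi> (g a) x" x] gromov_product_commute[of y "\<phi> (g a) x" x]
      long[OF a] by linarith
  have "gromov_product x y (\<phi> (g b) x) \<le> \<epsilon> + \<delta>"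
    using ping_pong_gromov_product[OF _ bs] eq unfolding y_def by simp
  then have fb: "gromov_product y (\<phi> (g b) x) x \<ge> D - \<epsilon> - \<delta>"
    using gromov_product_add_swap[of y "\<phi> (g b) x" x] long[OF b] by linarith
  have "gromov_product (\<phi> (g a) x) (\<phi> (g b) x) x \<ge>
      min (gromov_product (\<phi> (g a) x) y x) (gromov_product y (\<phi> (g b) x) x) - \<delta>"
    using delta_hyperbolicD[OF hyperbolic] .
  moreover have "gromov_product (\<phi> (g a) x) (\<phi> (g b) x) x \<le> \<epsilon>"
    using separated[OF a b \<open>a \<noteq> b\<close>] .
  ultimately show False using fa fb long_enough delta_nonneg by (auto simp: min_def split: if_splits)
qed

lemma ping_pong_inj_on: "inj_on (\<lambda>as. listprod G (map g as)) {as. set as \<subseteq> V \<and> length as = k}"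
proof -
  have "as = bs" if "set as \<subseteq> V" "set bs \<subseteq> V" "length as = length bs"
    and "listprod G (map g as) = listprod G (map g bs)" for as bs
    using that
  proof (induction as arbitrary: bs)
    case (Cons a as)
    then obtain b bs' where bs: "bs = b # bs'" by (cases bs) auto
    have "a = b" using Cons.prems(1,2,4) unfolding bs by (rule ping_pong_head_eq)
    moreover have "g a \<in> carrier G" "listprod G (map g as) \<in> carrier G"
      "listprod G (map g bs') \<in> carrier G"
      using Cons.prems(1,2) g_carrier unfolding bs by (auto intro!: listprod_closed simp: subset_iff)
    ultimately have "listprod G (map g as) = listprod G (map g bs')" using Cons.prems(4) bs by simp
    then show ?case using Cons.IH[of bs'] Cons.prems(1-3) bs \<open>a = b\<close> by simp
  qed simp
  then show ?thesis by (auto intro!: inj_onI)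
qed

end

section \<open>Short elements and acylindricity\<close>

lemma translate_geodesic_point_bounds:
  assumes c: "c \<in> carrier G" and short: "dist (\<phi> c x) x \<le> \<kappa>"
    and geodesic: "dist x p + dist p q = dist x q" and far: "\<kappa> + \<delta> < dist x p"
  shows "gromov_product (\<phi> c p) (\<phi> c q) x \<ge> dist (\<phi> c p) x - \<delta>"
    and "dist (\<phi> c q) x - dist p q \<le> dist (\<phi> c p) x"
    and "dist (\<phi> c p) x \<le> dist (\<phi> c q) x - dist p q + 2 * \<delta>"
    and "dist (\<phi> c p) x \<le> dist x p + \<kappa>"
proof -
  show gp: "gromov_product (\<phi> c p) (\<phi> c q) x \<ge> dist (\<phi> c p) x - \<delta>"
    using gromov_product_geodesic_point_ge[OF hyperbolic, of "\<phi> c x" "\<phi> c p" "\<phi> c q" x \<kappa>]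
      geodesic short far by (simp add: dist_act[OF c] dist_commute)
  show "dist (\<phi> c q) x - dist p q \<le> dist (\<phi> c p) x"
    using dist_triangle[of "\<phi> c q" x "\<phi> c p"] dist_act[OF c, of p q] by (simp add: dist_commute)
  show "dist (\<phi> c p) x \<le> dist (\<phi> c q) x - dist p q + 2 * \<delta>"
    using gp dist_act[OF c, of p q] unfolding gromov_product_def by simp
  show "dist (\<phi> c p) x \<le> dist x p + \<kappa>"
    using dist_triangle[of "\<phi> c p" x "\<phi> c x"] dist_act[OF c, of p x] short
    by (simp add: dist_commute)
qed

lemma dist_translates_geodesic_point_le:
  assumes a: "a \<in> carrier G" and b: "b \<in> carrier G"
    and short: "dist (\<phi> a x) x \<le> \<kappa>" "dist (\<phi> b x) x \<le> \<kappa>"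
    and geodesic: "dist x p + dist p q = dist x q"
    and far: "\<kappa> + \<delta> < dist x p" and near: "dist x p + \<kappa> \<le> T - \<delta>"
    and direction: "gromov_product (\<phi> a q) (\<phi> b q) x \<ge> T - \<delta>"
    and level: "\<bar>dist (\<phi> a q) x - dist (\<phi> b q) x\<bar> \<le> \<delta>"
  shows "dist (\<phi> a p) (\<phi> b p) \<le> 9 * \<delta>"
proof -
  note pa = translate_geodesic_point_bounds[OF a short(1) geodesic far]
  note pb = translate_geodesic_point_bounds[OF b short(2) geodesic far]
  let ?z = "\<phi> a p" and ?z' = "\<phi> b p" and ?Z = "\<phi> a q" and ?Z' = "\<phi> b q"
  have "gromov_product ?z ?z' x \<ge>
      min (gromov_product ?z ?Z x) (min (gromov_product ?Z ?Z' x) (gromov_product ?Z' ?z' x)) - 2 * \<delta>"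
    by (rule delta_hyperbolic_four_points[OF hyperbolic])
  moreover have "gromov_product ?Z' ?z' x \<ge> dist ?z' x - \<delta>"
    using pb(1) gromov_product_commute by metis
  ultimately have "gromov_product ?z ?z' x \<ge> min (dist ?z x) (dist ?z' x) - 3 * \<delta>"
    using pa(1,4) pb(4) direction near delta_nonneg by (auto simp: min_def split: if_splits)
  then have "dist ?z ?z' \<le> \<bar>dist ?z x - dist ?z' x\<bar> + 2 * (3 * \<delta>)"
    by (intro dist_le_of_gromov_product_ge) simp
  moreover have "\<bar>dist ?z x - dist ?z' x\<bar> \<le> 3 * \<delta>"
    using pa(2,3) pb(2,3) level by (simp add: abs_le_iff)
  ultimately show ?thesis by simp
qed

lemma card_fellow_travellers_le:
  assumes "geodesic_space TYPE('a)" and acylindrical: "acylindrical G \<phi> \<delta> \<kappa> N"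
    and "0 < \<delta>" and "\<delta> \<le> \<kappa>" and L: "4 * \<kappa> \<le> dist x q"
    and B: "B \<subseteq> carrier G" and short: "\<And>a. a \<in> B \<Longrightarrow> dist (\<phi> a x) x \<le> \<kappa>"
    and direction: "\<And>a b. a \<in> B \<Longrightarrow> b \<in> B \<Longrightarrow> gromov_product (\<phi> a q) (\<phi> b q) x \<ge> 10 * \<kappa> - \<delta>"
    and level: "\<And>a b. a \<in> B \<Longrightarrow> b \<in> B \<Longrightarrow> \<bar>dist (\<phi> a q) x - dist (\<phi> b q) x\<bar> \<le> \<delta>"
  shows "card B \<le> N"
proof (cases "B = {}")
  case False
  then obtain a0 where a0: "a0 \<in> B" by auto
  then have a0G: "a0 \<in> carrier G" using B by auto
  have "\<exists>p1 p2. dist x p1 = 3 * \<kappa> \<and> dist x p1 + dist p1 q = dist x q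
      \<and> dist x p2 = 4 * \<kappa> \<and> dist x p2 + dist p2 q = dist x q \<and> dist p1 p2 = 4 * \<kappa> - 3 * \<kappa>"
    using assms(3,4) L by (intro geodesic_space_points_between[OF assms(1)]) auto
  then obtain p1 p2 where p1: "dist x p1 = 3 * \<kappa>" "dist x p1 + dist p1 q = dist x q"
    and p2: "dist x p2 = 4 * \<kappa>" "dist x p2 + dist p2 q = dist x q" and "dist p1 p2 = \<kappa>"
    by auto
  define S where "S = {g \<in> carrier G. dist (\<phi> g p1) p1 \<le> 100 * \<delta> \<and> dist (\<phi> g p2) p2 \<le> 100 * \<delta>}"
  have S: "finite S" "card S \<le> N"
    using acylindrical \<open>dist p1 p2 = \<kappa>\<close> unfolding acylindrical_def Let_def S_def by auto
  have "inj_on (\<lambda>b. inv a0 \<otimes> b) B"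
  proof (rule inj_onI)
    fix b b' assume "b \<in> B" "b' \<in> B" "inv a0 \<otimes> b = inv a0 \<otimes> b'"
    moreover from this(1,2) have "b \<in> carrier G" "b' \<in> carrier G" using B by auto
    ultimately show "b = b'" using a0G by simp
  qed
  moreover have "(\<lambda>b. inv a0 \<otimes> b) ` B \<subseteq> S"
    unfolding S_def
  proof (intro image_subsetI CollectI conjI)
    fix b assume b: "b \<in> B"
    then have bG: "b \<in> carrier G" using B by auto
    show "inv a0 \<otimes> b \<in> carrier G" using a0G bG by simp
    have fellow: "dist (\<phi> b p) (\<phi> a0 p) \<le> 9 * \<delta>"
      if "dist x p + dist p q = dist x q" "\<kappa> + \<delta> < dist x p" "dist x p + \<kappa> \<le> 10 * \<kappa> - \<delta>" for p
      using dist_translates_geodesic_point_le[OF a0G bG short[OF a0] short[OF b] that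
          direction[OF a0 b] level[OF a0 b]]
      by (simp add: dist_commute)
    show "dist (\<phi> (inv a0 \<otimes> b) p1) p1 \<le> 100 * \<delta>"
      unfolding dist_act_inv_mult[OF a0G bG] using fellow[OF p1(2)] p1(1) assms(3,4) by linarith
    show "dist (\<phi> (inv a0 \<otimes> b) p2) p2 \<le> 100 * \<delta>"
      unfolding dist_act_inv_mult[OF a0G bG] using fellow[OF p2(2)] p2(1) assms(3,4) by linarith
  qed
  ultimately have "card B \<le> card S" using S(1) by (rule card_inj_on_le)
  then show ?thesis using S(2) by simp
qed simp

lemma card_cluster_le:
  assumes "geodesic_space TYPE('a)" and "acylindrical G \<phi> \<delta> \<kappa> N"
    and \<delta>: "0 < \<delta>" "\<delta> \<le> \<kappa>" and L: "4 * \<kappa> \<le> dist x q"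
    and B: "finite B" "B \<subseteq> carrier G" and short: "\<And>a. a \<in> B \<Longrightarrow> dist (\<phi> a x) x \<le> \<kappa>"
    and cluster: "\<And>a. a \<in> B \<Longrightarrow> gromov_product (\<phi> a q) w x > 10 * \<kappa>"
  shows "real (card B) \<le> 3 * \<kappa> / \<delta> * N"
proof -
  define K where "K = \<lfloor>2 * \<kappa> / \<delta>\<rfloor>"
  \<comment> \<open>slots of width \<open>\<delta>\<close> for the distance from \<open>x\<close> to \<open>a q\<close>; each slot consists of fellow travellers\<close>
  define level where "level a = \<lfloor>(dist (\<phi> a q) x - dist q x + \<kappa>) / \<delta>\<rfloor>" for a
  have level_range: "level a \<in> {0..K}" if "a \<in> B" for a
  proof -
    have "\<bar>dist (\<phi> a q) x - dist q x\<bar> \<le> \<kappa>"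
      using abs_dist_act_diff_le[of a q x] short[OF that] B that by force
    then have "0 \<le> (dist (\<phi> a q) x - dist q x + \<kappa>) / \<delta>"
      and "(dist (\<phi> a q) x - dist q x + \<kappa>) / \<delta> \<le> 2 * \<kappa> / \<delta>"
      using \<delta> by (auto simp: abs_le_iff divide_right_mono)
    then show ?thesis unfolding level_def K_def by (auto intro: floor_mono)
  qed
  have "real (card B) \<le> real (card {0..K}) * N"
  proof (rule card_le_cover[where C = "\<lambda>j. {a \<in> B. level a = j}"])
    show "B \<subseteq> (\<Union>j\<in>{0..K}. {a \<in> B. level a = j})" using level_range by auto
    fix j
    have "card {a \<in> B. level a = j} \<le> N"
    proof (rule card_fellow_travellers_le[OF assms(1,2) \<delta> L])
      show "{a \<in> B. level a = j} \<subseteq> carrier G" using B by auto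
      show "\<And>a. a \<in> {a \<in> B. level a = j} \<Longrightarrow> dist (\<phi> a x) x \<le> \<kappa>" using short by auto
    next
      fix a b assume a: "a \<in> {a \<in> B. level a = j}" and b: "b \<in> {a \<in> B. level a = j}"
      have "gromov_product (\<phi> a q) w x > 10 * \<kappa>" "gromov_product w (\<phi> b q) x > 10 * \<kappa>"
        using cluster a b gromov_product_commute[of w "\<phi> b q" x] by auto
      then have "min (gromov_product (\<phi> a q) w x) (gromov_product w (\<phi> b q) x) > 10 * \<kappa>"
        by simp
      moreover have "gromov_product (\<phi> a q) (\<phi> b q) x \<ge>
          min (gromov_product (\<phi> a q) w x) (gromov_product w (\<phi> b q) x) - \<delta>"
        using delta_hyperbolicD[OF hyperbolic] .
      ultimately show "gromov_product (\<phi> a q) (\<phi> b q) x \<ge> 10 * \<kappa> - \<delta>" by linarith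
      have "level a = level b" using a b by simp
      then show "\<bar>dist (\<phi> a q) x - dist (\<phi> b q) x\<bar> \<le> \<delta>"
        using abs_diff_le_of_floor_divide_eq[OF _ \<delta>(1)] unfolding level_def by fastforce
    qed
    then show "real (card {a \<in> B. level a = j}) \<le> real N" by simp
  qed (use B in auto)
  also have "real (card {0..K}) \<le> 3 * \<kappa> / \<delta>"
    unfolding K_def using \<delta> by (rule real_card_floor_range_le)
  then have "real (card {0..K}) * N \<le> 3 * \<kappa> / \<delta> * N" by (rule mult_right_mono) simp
  finally show ?thesis .
qed

lemma exists_separated_subset:
  assumes "geodesic_space TYPE('a)" and "acylindrical G \<phi> \<delta> \<kappa> N"
    and \<delta>: "0 < \<delta>" "\<delta> \<le> \<kappa>" and L: "11 * \<kappa> < dist x q"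
    and A: "finite A" "A \<subseteq> carrier G" and short: "\<And>a. a \<in> A \<Longrightarrow> dist (\<phi> a x) x \<le> \<kappa>"
  obtains V where "V \<subseteq> A"
    and "\<And>a b. a \<in> V \<Longrightarrow> b \<in> V \<Longrightarrow> a \<noteq> b \<Longrightarrow> gromov_product (\<phi> a q) (\<phi> b q) x \<le> 10 * \<kappa>"
    and "real (card A) \<le> real (card V) * (3 * \<kappa> / \<delta> * N)"
proof -
  define close where "close a b \<longleftrightarrow> gromov_product (\<phi> a q) (\<phi> b q) x > 10 * \<kappa>" for a b
  have "close a a" if "a \<in> A" for a
  proof -
    have "a \<in> carrier G" using A(2) that by auto
    then have "\<bar>dist (\<phi> a q) x - dist q x\<bar> \<le> \<kappa>"
      using abs_dist_act_diff_le short[OF that] by (meson order_trans)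
    then show ?thesis using L unfolding close_def gromov_product_self by (simp add: abs_le_iff dist_commute)
  qed
  moreover have "close b a" if "close a b" for a b
    using that gromov_product_commute unfolding close_def by metis
  ultimately obtain V where V: "V \<subseteq> A" "\<forall>a\<in>V. \<forall>b\<in>V. a \<noteq> b \<longrightarrow> \<not> close a b"
    "\<forall>a\<in>A. \<exists>v\<in>V. close a v"
    using exists_dominating_independent_subset[OF A(1), of close] by blast
  have bound: "real (card A) \<le> real (card V) * (3 * \<kappa> / \<delta> * N)"
  proof (rule card_le_cover[where C = "\<lambda>v. {a \<in> A. close a v}"])
    show "finite V" using V(1) A(1) finite_subset by blast
    show "A \<subseteq> (\<Union>v\<in>V. {a \<in> A. close a v})" using V(3) by blast
    show "finite {a \<in> A. close a v}" for v using A(1) by simp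
    show "real (card {a \<in> A. close a v}) \<le> 3 * \<kappa> / \<delta> * N" for v
      using A short L \<delta>
      by (intro card_cluster_le[OF assms(1,2) \<delta>, where w = "\<phi> v q"]) (auto simp: close_def)
  qed
  show ?thesis
    by (rule that[OF V(1) _ bound]) (meson V(2) close_def not_le)
qed

lemma translates_ping_pong_inj_on:
  assumes uG: "u \<in> carrier G" and VG: "V \<subseteq> carrier G"
    and short: "\<And>a. a \<in> V \<Longrightarrow> dist (\<phi> a x) x \<le> \<kappa>"
    and separated: "\<And>a b. a \<in> V \<Longrightarrow> b \<in> V \<Longrightarrow> a \<noteq> b \<Longrightarrow>
      gromov_product (\<phi> a (\<phi> u x)) (\<phi> b (\<phi> u x)) x \<le> T"
    and backtrack: "\<And>b. b \<in> V \<Longrightarrow> gromov_product (\<phi> (inv u) x) (\<phi> b (\<phi> u x)) x \<le> T + \<delta>"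
    and long: "dist (\<phi> u x) x > 2 * T + 3 * \<kappa> + 4 * \<delta>"
  shows "inj_on (\<lambda>as. listprod G (map (\<lambda>a. a \<otimes> u) as)) {as. set as \<subseteq> V \<and> length as = k}"
proof (rule ping_pong_inj_on[where D = "dist (\<phi> u x) x - \<kappa>" and \<epsilon> = "T + \<delta> + \<kappa>"])
  have aG: "a \<in> carrier G" if "a \<in> V" for a using VG that by auto
  have image: "\<phi> (a \<otimes> u) x = \<phi> a (\<phi> u x)" if "a \<in> V" for a
    using act_mult[OF aG[OF that] uG] .
  show "a \<otimes> u \<in> carrier G" if "a \<in> V" for a using aG[OF that] uG by simp
  show "dist (\<phi> (a \<otimes> u) x) x \<ge> dist (\<phi> u x) x - \<kappa>" if "a \<in> V" for a
    using abs_dist_act_diff_le[OF aG[OF that], of "\<phi> u x" x] short[OF that] image[OF that]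
    by (simp add: abs_le_iff)
  show "gromov_product (\<phi> (inv (a \<otimes> u)) x) (\<phi> (b \<otimes> u) x) x \<le> T + \<delta> + \<kappa>"
    if a: "a \<in> V" and b: "b \<in> V" for a b
  proof -
    have "\<phi> (inv (a \<otimes> u)) x = \<phi> (inv u) (\<phi> (inv a) x)"
      using aG[OF a] uG by (simp add: inv_mult_group act_mult)
    then have "dist (\<phi> (inv (a \<otimes> u)) x) (\<phi> (inv u) x) = dist (\<phi> (inv a) x) x"
      using uG by (simp add: dist_act)
    also have "\<dots> = dist (\<phi> a x) x"
      using dist_act_inv[OF aG[OF a], of x x] by (simp add: dist_commute)
    finally have "dist (\<phi> (inv (a \<otimes> u)) x) (\<phi> (inv u) x) = dist (\<phi> a x) x" .
    then show ?thesis
      using gromov_product_lipschitz[of "\<phi> (inv (a \<otimes> u)) x" "\<phi> (b \<otimes> u) x" x "\<phi> (inv u) x"]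
        backtrack[OF b] short[OF a] image[OF b] by (simp add: abs_le_iff)
  qed
  show "gromov_product (\<phi> (a \<otimes> u) x) (\<phi> (b \<otimes> u) x) x \<le> T + \<delta> + \<kappa>"
    if "a \<in> V" "b \<in> V" "a \<noteq> b" for a b
  proof -
    have "0 \<le> \<kappa>" using short[OF that(1)] zero_le_dist order_trans by metis
    then show ?thesis
      unfolding image[OF that(1)] image[OF that(2)] using separated[OF that] delta_nonneg by linarith
  qed
  show "dist (\<phi> u x) x - \<kappa> > 2 * (T + \<delta> + \<kappa> + \<delta>)" using long by simp
qed

lemma card_set_power_ge_ping_pong:
  assumes U: "finite U" "U \<subseteq> carrier G" and u: "u \<in> U" and V: "V \<subseteq> U"
    and short: "\<And>a. a \<in> V \<Longrightarrow> dist (\<phi> a x) x \<le> \<kappa>"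
    and separated: "\<And>a b. a \<in> V \<Longrightarrow> b \<in> V \<Longrightarrow> a \<noteq> b \<Longrightarrow>
      gromov_product (\<phi> a (\<phi> u x)) (\<phi> b (\<phi> u x)) x \<le> T"
    and backtrack: "\<And>b. b \<in> V \<Longrightarrow> gromov_product (\<phi> (inv u) x) (\<phi> b (\<phi> u x)) x \<le> T + \<delta>"
    and long: "dist (\<phi> u x) x > 2 * T + 3 * \<kappa> + 4 * \<delta>"
    and "k \<ge> 1"
  shows "card V ^ k \<le> card (set_power G U (2 * k - 1))"
proof -
  let ?word = "\<lambda>as. listprod G (map (\<lambda>a. a \<otimes> u) as)"
  have "inj_on ?word {as. set as \<subseteq> V \<and> length as = k}"
    using U(2) u V by (intro translates_ping_pong_inj_on[OF _ _ short separated backtrack long]) auto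
  then have "card V ^ k = card (?word ` {as. set as \<subseteq> V \<and> length as = k})"
    using card_lists_length_eq[OF finite_subset[OF V U(1)]] by (simp add: card_image)
  also have "\<dots> \<le> card ((\<lambda>w. w \<otimes> u) ` set_power G U (2 * k - 1))"
  proof (rule card_mono)
    show "finite ((\<lambda>w. w \<otimes> u) ` set_power G U (2 * k - 1))"
      by (intro finite_imageI finite_set_power U(1))
    show "?word ` {as. set as \<subseteq> V \<and> length as = k} \<subseteq> (\<lambda>w. w \<otimes> u) ` set_power G U (2 * k - 1)"
      using listprod_mult_right_mem_set_power[OF U(2) u] V \<open>k \<ge> 1\<close> by fastforce
  qed
  also have "\<dots> \<le> card (set_power G U (2 * k - 1))"
    by (rule card_image_le[OF finite_set_power[OF U(1)]])
  finally show ?thesis .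
qed

lemma exists_ping_pong_subset:
  assumes "geodesic_space TYPE('a)" and "acylindrical G \<phi> \<delta> \<kappa> N"
    and \<delta>: "0 < \<delta>" "\<delta> \<le> \<kappa>" and u: "u \<in> carrier G" and L: "11 * \<kappa> < dist x (\<phi> u x)"
    and A: "finite A" "A \<subseteq> carrier G" and short: "\<And>a. a \<in> A \<Longrightarrow> dist (\<phi> a x) x \<le> \<kappa>"
  shows "\<exists>V\<subseteq>A. (\<forall>a\<in>V. \<forall>b\<in>V. a \<noteq> b \<longrightarrow>
      gromov_product (\<phi> a (\<phi> u x)) (\<phi> b (\<phi> u x)) x \<le> 10 * \<kappa>)
    \<and> (\<forall>b\<in>V. gromov_product (\<phi> (inv u) x) (\<phi> b (\<phi> u x)) x \<le> 10 * \<kappa> + \<delta>)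
    \<and> real (card A) \<le> (real (card V) + 1) * (3 * \<kappa> / \<delta> * N)"
proof -
  obtain V0 where V0: "V0 \<subseteq> A"
    and separated: "\<And>a b. a \<in> V0 \<Longrightarrow> b \<in> V0 \<Longrightarrow> a \<noteq> b \<Longrightarrow>
      gromov_product (\<phi> a (\<phi> u x)) (\<phi> b (\<phi> u x)) x \<le> 10 * \<kappa>"
    and bound: "real (card A) \<le> real (card V0) * (3 * \<kappa> / \<delta> * N)"
    using exists_separated_subset[OF assms(1,2) \<delta> L A short] by blast
  define V where "V = {b \<in> V0. gromov_product (\<phi> (inv u) x) (\<phi> b (\<phi> u x)) x \<le> 10 * \<kappa> + \<delta>}"
  have finite: "finite V0" using V0 A(1) finite_subset by blast
  have "card (V0 - V) \<le> 1"
  proof -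
    have "V0 - V = {b \<in> V0. gromov_product (\<phi> (inv u) x) (\<phi> b (\<phi> u x)) x > 10 * \<kappa> + \<delta>}"
      unfolding V_def by auto
    then show ?thesis
      using card_gromov_product_gt_le_one[OF hyperbolic finite separated] by simp
  qed
  moreover have "card V0 \<le> card V + card (V0 - V)"
    using card_Un_le[of V "V0 - V"] V_def by (simp add: Un_absorb1 Un_Diff_cancel)
  ultimately have "real (card V0) \<le> real (card V) + 1" by linarith
  then have "real (card V0) * (3 * \<kappa> / \<delta> * N) \<le> (real (card V) + 1) * (3 * \<kappa> / \<delta> * N)"
    by (rule mult_right_mono) (use \<delta> in simp)
  show ?thesis
  proof (intro exI conjI)
    show "V \<subseteq> A" using V0 unfolding V_def by auto
    show "\<forall>a\<in>V. \<forall>b\<in>V. a \<noteq> b \<longrightarrow>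
        gromov_product (\<phi> a (\<phi> u x)) (\<phi> b (\<phi> u x)) x \<le> 10 * \<kappa>"
      using separated unfolding V_def by blast
    show "\<forall>b\<in>V. gromov_product (\<phi> (inv u) x) (\<phi> b (\<phi> u x)) x \<le> 10 * \<kappa> + \<delta>"
      unfolding V_def by blast
    show "real (card A) \<le> (real (card V) + 1) * (3 * \<kappa> / \<delta> * N)"
      using bound \<open>real (card V0) * _ \<le> _\<close> by linarith
  qed
qed

lemma ping_pong_growth:
  assumes "geodesic_space TYPE('a)" and "acylindrical G \<phi> \<delta> \<kappa> N"
    and \<delta>: "0 < \<delta>" "\<delta> \<le> \<kappa>"
    and U: "finite U" "U \<noteq> {}" "U \<subseteq> carrier G"
    and long: "30 * \<kappa> \<le> Max ((\<lambda>u. dist (\<phi> u x) x) ` U)"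
  shows "\<exists>m. real (card {a \<in> U. dist (\<phi> a x) x \<le> \<kappa>}) \<le> (real m + 1) * (3 * \<kappa> / \<delta> * N)
    \<and> (\<forall>k\<ge>1. m ^ k \<le> card (set_power G U (2 * k - 1)))"
proof -
  have "Max ((\<lambda>u. dist (\<phi> u x) x) ` U) \<in> (\<lambda>u. dist (\<phi> u x) x) ` U"
    using U(1,2) by (intro Max_in) auto
  then obtain u where "Max ((\<lambda>u. dist (\<phi> u x) x) ` U) = dist (\<phi> u x) x" "u \<in> U"
    by (rule imageE)
  then have u: "u \<in> U" "u \<in> carrier G" and u_long: "30 * \<kappa> \<le> dist (\<phi> u x) x"
    using long U(3) by auto
  define A where "A = {a \<in> U. dist (\<phi> a x) x \<le> \<kappa>}"
  have A: "finite A" "A \<subseteq> carrier G" "\<And>a. a \<in> A \<Longrightarrow> dist (\<phi> a x) x \<le> \<kappa>"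
    unfolding A_def using U(1,3) by auto
  have "11 * \<kappa> < dist x (\<phi> u x)" using u_long \<delta> by (simp add: dist_commute)
  then have "\<exists>V\<subseteq>A. (\<forall>a\<in>V. \<forall>b\<in>V. a \<noteq> b \<longrightarrow>
        gromov_product (\<phi> a (\<phi> u x)) (\<phi> b (\<phi> u x)) x \<le> 10 * \<kappa>)
      \<and> (\<forall>b\<in>V. gromov_product (\<phi> (inv u) x) (\<phi> b (\<phi> u x)) x \<le> 10 * \<kappa> + \<delta>)
      \<and> real (card A) \<le> (real (card V) + 1) * (3 * \<kappa> / \<delta> * N)"
    by (rule exists_ping_pong_subset[OF assms(1,2) \<delta> u(2) _ A(1,2)]) (rule A(3))
  then obtain V where V: "V \<subseteq> A"
    and separated: "\<forall>a\<in>V. \<forall>b\<in>V. a \<noteq> b \<longrightarrow>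
      gromov_product (\<phi> a (\<phi> u x)) (\<phi> b (\<phi> u x)) x \<le> 10 * \<kappa>"
    and backtrack: "\<forall>b\<in>V. gromov_product (\<phi> (inv u) x) (\<phi> b (\<phi> u x)) x \<le> 10 * \<kappa> + \<delta>"
    and bound: "real (card A) \<le> (real (card V) + 1) * (3 * \<kappa> / \<delta> * N)"
    by (elim exE conjE) (rule that)
  have "V \<subseteq> U" using V unfolding A_def by blast
  moreover have "\<And>a. a \<in> V \<Longrightarrow> dist (\<phi> a x) x \<le> \<kappa>" using V A(3) by blast
  moreover have "2 * (10 * \<kappa>) + 3 * \<kappa> + 4 * \<delta> < dist (\<phi> u x) x" using u_long \<delta> by simp
  ultimately have "card V ^ k \<le> card (set_power G U (2 * k - 1))" if "k \<ge> 1" for k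
    using separated backtrack that
    by (intro card_set_power_ge_ping_pong[OF U(1,3) u(1)]) blast+
  then show ?thesis using bound unfolding A_def by blast
qed

end

theorem proposition5p5:
  fixes G :: "('g, 'm) monoid_scheme"
    and \<phi> :: "'g \<Rightarrow> 'a::metric_space \<Rightarrow> 'a"
    and \<delta> \<kappa>0 :: real and N0 :: nat
    and U :: "'g set" and x0 :: 'a and n :: nat
  assumes "\<delta> > 0"
    and "geodesic_space TYPE('a)"
    and "delta_hyperbolic \<delta> TYPE('a)"
    and "isometric_action G \<phi>"
    and "acylindrical G \<phi> \<delta> \<kappa>0 N0"
    and "\<kappa>0 \<ge> \<delta>"
    and "finite U" and "U \<noteq> {}" and "U \<subseteq> carrier G"
    and "(\<Sum>u\<in>U. dist (\<phi> u x0) x0) / real (card U) \<le> displacement_energy \<phi> U + \<delta>"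
    and "real (card {u \<in> U. dist (\<phi> u x0) x0 \<le> \<kappa>0}) \<ge> real (card U) / 4"
    and "Max ((\<lambda>u. dist (\<phi> u x0) x0) ` U) \<ge> 10^4 * \<kappa>0"
    and "n \<ge> 1"
  shows "real (card (set_power G U n)) \<ge>
           ((1 / 10^6) * ((\<delta> / real N0) / \<kappa>0) / 4 * real (card U)) ^ ((n + 1) div 2)"
proof -
  interpret hyperbolic_isometric_action G \<phi> \<delta>
    using assms(3,4) by unfold_locales
  have "\<exists>m. real (card {u \<in> U. dist (\<phi> u x0) x0 \<le> \<kappa>0}) \<le> (real m + 1) * (3 * \<kappa>0 / \<delta> * N0)
      \<and> (\<forall>k\<ge>1. m ^ k \<le> card (set_power G U (2 * k - 1)))"
    using assms(1,6,12) by (intro ping_pong_growth[OF assms(2,5,1,6,7,8,9)]) simp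
  then obtain m where short: "real (card U) / 4 \<le> (real m + 1) * (3 * \<kappa>0 / \<delta> * N0)"
    and growth: "\<And>k. k \<ge> 1 \<Longrightarrow> m ^ k \<le> card (set_power G U (2 * k - 1))"
    using assms(11) by force
  define \<beta> where "\<beta> = (1 / 10^6) * ((\<delta> / real N0) / \<kappa>0) / 4 * real (card U)"
  define k where "k = (n + 1) div 2"
  have k: "1 \<le> k" "2 * k - 1 \<le> n" using assms(13) unfolding k_def by auto
  have "\<beta> \<le> max 1 (real m)"
  proof -
    have "N0 \<ge> 1" using assms(5) unfolding acylindrical_def by simp
    then have "1000000 / 3 * \<beta> \<le> real m + 1"
      using short assms(1,6) unfolding \<beta>_def by (simp add: field_simps)
    then show ?thesis by linarith
  qed
  then have "\<beta> ^ k \<le> max 1 (real m) ^ k" using assms(1,6) unfolding \<beta>_def by (intro power_mono) auto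
  also have "\<dots> \<le> real (card (set_power G U (2 * k - 1)))"
    using growth[OF k(1)] card_set_power_mono[OF assms(9,7,8), of 0 "2 * k - 1"]
    by (cases "m \<ge> 1") (auto simp: max_def simp flip: of_nat_power)
  also have "\<dots> \<le> real (card (set_power G U n))"
    using card_set_power_mono[OF assms(9,7,8) k(2)] by simp
  finally show ?thesis unfolding \<beta>_def k_def .
qed

end
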